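(* Let $\mathcal{D}=(\mathcal{P},\mathcal{L})$ be a $(G,2)$-point-transitive linear space, and let $\overline{\mathcal{D}}$ be its complement. Let $(\sigma,L)$ be an antiflag of $\mathcal{D}$ (so $\sigma\in\mathcal{P}\setminus L$, $L\in\mathcal{L}$) such that $\Omega=(\sigma,\mathcal{P}\setminus L)^G$ is a feasible $G$-orbit on the set of flags of $\overline{\mathcal{D}}$, and let $\Psi=((\sigma,\mathcal{P}\setminus L),(\tau,\mathcal{P}\setminus N))^G$ be a self-paired $G$-orbit on $\mathcal{C}(\overline{\mathcal{D}},\Omega)$. Then the $G$-flag graph $\Gamma=\Gamma(\overline{\mathcal{D}},\Omega,\Psi)$ has order $|\mathcal{P}|\cdot|L^{G_\sigma}|$ and valency $(|\mathcal{P}|-|L|-1)\cdot|N^{G_{\sigma,\tau,L}}|$. Moreover, there are exactly $|L^{G_{\sigma,\tau}}|$ vertices in $\Omega(\sigma)$ that have neighbours in $\Omega(\tau)$, and each of them has exactly $|N^{G_{\sigma,\tau,L}}|$ neighbours in $\Omega(\tau)$.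
   Context: All groups are finite. A linear space is an incidence structure of points and lines (lines identified with point sets) in which each line has at least two points and any two points lie on exactly one line; it is $(G,2)$-point-transitive if $G$ acts as automorphisms, 2-transitively on points. The complement $\overline{\mathcal{D}}$ has point set $\mathcal{P}$ and blocks $\mathcal{P}\setminus L$, $L\in\mathcal{L}$. A flag of a design is a pair (point, block containing it); an antiflag is a pair (point, block not containing it). For a $G$-orbit $\Omega$ on flags and a point $\sigma$, $\Omega(\sigma)$ is the set of flags in $\Omega$ with point-entry $\sigma$. $\Omega$ is feasible if $|\Omega(\sigma)|\ge2$ for some (hence all) point $\sigma$ and, for some (hence all) flag $(\sigma,M)\in\Omega$, $G_{\sigma,M}$ (setwise stabilizer of $M$ in $G_\sigma$) is transitive on $M\setminus\{\sigma\}$. $\mathcal{C}(\overline{\mathcal{D}},\Omega)=\{((\sigma,M),(\tau,M'))\in\Omega\times\Omega:\sigma\ne\tau,\ \sigma,\tau\in M\cap M'\}$. A $G$-orbit $\Psi$ on it is self-paired if $((\sigma,M),(\tau,M'))\in\Psi$ implies $((\tau,M'),(\sigma,M))\in\Psi$. The $G$-flag graph $\Gamma(\overline{\mathcal{D}},\Omega,\Psi)$ has vertex set $\Omega$, with two flags adjacent iff the ordered pair lies in $\Psi$. $G_{\sigma,\tau}=G_\sigma\cap G_\tau$, and $G_{\sigma,\tau,L}$ is the setwise stabilizer of $L$ in $G_{\sigma,\tau}$; $X^K$ denotes the orbit of $X$ under $K$. *)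

theory Defs
  imports "HOL-Algebra.Group_Action"
begin

definition linear_space :: "'a set \<Rightarrow> 'a set set \<Rightarrow> bool" where
  "linear_space P Ls \<longleftrightarrow>
     (\<forall>L\<in>Ls. L \<subseteq> P \<and> 2 \<le> card L) \<and>
     (\<forall>x\<in>P. \<forall>y\<in>P. x \<noteq> y \<longrightarrow> (\<exists>!L. L \<in> Ls \<and> x \<in> L \<and> y \<in> L))"

definition G2_point_transitive ::
  "('g, 'b) monoid_scheme \<Rightarrow> ('g \<Rightarrow> 'a \<Rightarrow> 'a) \<Rightarrow> 'a set \<Rightarrow> 'a set set \<Rightarrow> bool" where
  "G2_point_transitive G \<phi> P Ls \<longleftrightarrow>
     finite P \<and> finite (carrier G) \<and>
     linear_space P Ls \<and> group_action G P \<phi> \<and>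
     (\<forall>g\<in>carrier G. \<forall>L\<in>Ls. \<phi> g ` L \<in> Ls) \<and>
     (\<forall>x\<in>P. \<forall>y\<in>P. \<forall>x'\<in>P. \<forall>y'\<in>P. x \<noteq> y \<longrightarrow> x' \<noteq> y' \<longrightarrow>
        (\<exists>g\<in>carrier G. \<phi> g x = x' \<and> \<phi> g y = y'))"

definition compl_blocks :: "'a set \<Rightarrow> 'a set set \<Rightarrow> 'a set set" where
  "compl_blocks P Ls = (\<lambda>L. P - L) ` Ls"

definition compl_flags :: "'a set \<Rightarrow> 'a set set \<Rightarrow> ('a \<times> 'a set) set" where
  "compl_flags P Ls = {(x, M). M \<in> compl_blocks P Ls \<and> x \<in> M}"

definition flag_act :: "('g \<Rightarrow> 'a \<Rightarrow> 'a) \<Rightarrow> 'g \<Rightarrow> 'a \<times> 'a set \<Rightarrow> 'a \<times> 'a set" where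
  "flag_act \<phi> g f = (\<phi> g (fst f), \<phi> g ` snd f)"

definition flag_orbit :: "('g, 'b) monoid_scheme \<Rightarrow> ('g \<Rightarrow> 'a \<Rightarrow> 'a) \<Rightarrow> 'a \<times> 'a set
    \<Rightarrow> ('a \<times> 'a set) set" where
  "flag_orbit G \<phi> f = (\<lambda>g. flag_act \<phi> g f) ` carrier G"

definition flagpair_orbit :: "('g, 'b) monoid_scheme \<Rightarrow> ('g \<Rightarrow> 'a \<Rightarrow> 'a)
    \<Rightarrow> ('a \<times> 'a set) \<times> ('a \<times> 'a set) \<Rightarrow> (('a \<times> 'a set) \<times> ('a \<times> 'a set)) set" where
  "flagpair_orbit G \<phi> p = (\<lambda>g. (flag_act \<phi> g (fst p), flag_act \<phi> g (snd p))) ` carrier G"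

definition set_orbit :: "('g \<Rightarrow> 'a \<Rightarrow> 'a) \<Rightarrow> 'g set \<Rightarrow> 'a set \<Rightarrow> 'a set set" where
  "set_orbit \<phi> H X = (\<lambda>g. \<phi> g ` X) ` H"

definition setwise_stab :: "('g \<Rightarrow> 'a \<Rightarrow> 'a) \<Rightarrow> 'g set \<Rightarrow> 'a set \<Rightarrow> 'g set" where
  "setwise_stab \<phi> H X = {g \<in> H. \<phi> g ` X = X}"

definition flags_at :: "('a \<times> 'a set) set \<Rightarrow> 'a \<Rightarrow> ('a \<times> 'a set) set" where
  "flags_at \<Omega> x = {f \<in> \<Omega>. fst f = x}"

definition feasible :: "('g, 'b) monoid_scheme \<Rightarrow> ('g \<Rightarrow> 'a \<Rightarrow> 'a) \<Rightarrow> 'a set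
    \<Rightarrow> ('a \<times> 'a set) set \<Rightarrow> bool" where
  "feasible G \<phi> P \<Omega> \<longleftrightarrow>
     (\<exists>x\<in>P. 2 \<le> card (flags_at \<Omega> x)) \<and>
     (\<exists>(x, M)\<in>\<Omega>. \<forall>y\<in>M - {x}. \<forall>z\<in>M - {x}.
        \<exists>g\<in>setwise_stab \<phi> (stabilizer G \<phi> x) M. \<phi> g y = z)"

definition flag_C :: "('a \<times> 'a set) set \<Rightarrow> (('a \<times> 'a set) \<times> ('a \<times> 'a set)) set" where
  "flag_C \<Omega> = {((x, M), (y, M')). (x, M) \<in> \<Omega> \<and> (y, M') \<in> \<Omega> \<and> x \<noteq> y \<and>
                  x \<in> M \<inter> M' \<and> y \<in> M \<inter> M'}"

definition self_paired :: "('c \<times> 'c) set \<Rightarrow> bool" where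
  "self_paired \<Psi> \<longleftrightarrow> (\<forall>u v. (u, v) \<in> \<Psi> \<longrightarrow> (v, u) \<in> \<Psi>)"

text \<open>The flag graph Gamma(Dbar, Omega, Psi) has vertex set Omega and adjacency
relation Psi; neighbourhood of a vertex:\<close>
definition nbrs :: "('c \<times> 'c) set \<Rightarrow> 'c \<Rightarrow> 'c set" where
  "nbrs \<Psi> v = {w. (v, w) \<in> \<Psi>}"

end

theory Submission
  imports Defs
begin

(* Everything is orbit counting. The flag (\<sigma>, P - L) has stabilizer K = G\<^sub>\<sigma>\<^sub>,\<^sub>L, so
   |\<Omega>| = |G : K| = |P| |G\<^sub>\<sigma> : K| = |P| |L^G\<^sub>\<sigma>|. The neighbours of a vertex g(\<sigma>, P - L) are the
   g-images of the K-orbit of (\<tau>, P - N); counting this orbit through its first entry gives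
   |\<tau>^K| |N^K\<^sub>\<tau>|, where feasibility makes \<tau>^K = P - L - {\<sigma>} and K\<^sub>\<tau> = G\<^sub>\<sigma>\<^sub>,\<^sub>\<tau>\<^sub>,\<^sub>L.
   A vertex of \<Omega>(\<sigma>) has a neighbour in \<Omega>(\<tau>) exactly when it is h(\<sigma>, P - L) with
   h \<in> G\<^sub>\<sigma>\<^sub>,\<^sub>\<tau>, and its neighbours in \<Omega>(\<tau>) are then the h-images of the
   G\<^sub>\<sigma>\<^sub>,\<^sub>\<tau>\<^sub>,\<^sub>L-orbit of (\<tau>, P - N). *)

lemma card_Pair_image: "card (Pair a ` S) = card S"
  by (simp add: card_image inj_on_def)

lemma Diff_eq_Diff_iff: "\<lbrakk>A \<subseteq> C; B \<subseteq> C\<rbrakk> \<Longrightarrow> C - A = C - B \<longleftrightarrow> A = B"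
  by blast

(* An action given by a map that is only meaningful on X; unlike group_action it needs no
   extensional restriction, so the induced actions on subsets and on flags are stated directly. *)
locale action_on = group G for G (structure) +
  fixes X :: "'x set" and A :: "'g \<Rightarrow> 'x \<Rightarrow> 'x"
  assumes act_closed: "\<lbrakk>g \<in> carrier G; x \<in> X\<rbrakk> \<Longrightarrow> A g x \<in> X"
    and act_mult: "\<lbrakk>g \<in> carrier G; h \<in> carrier G; x \<in> X\<rbrakk> \<Longrightarrow> A (g \<otimes> h) x = A g (A h x)"
    and act_one: "x \<in> X \<Longrightarrow> A \<one> x = x"
begin

lemma act_inv_act: "\<lbrakk>g \<in> carrier G; x \<in> X\<rbrakk> \<Longrightarrow> A (inv g) (A g x) = x"
  by (metis act_mult act_one inv_closed l_inv)

lemma act_act_inv: "\<lbrakk>g \<in> carrier G; x \<in> X\<rbrakk> \<Longrightarrow> A g (A (inv g) x) = x"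
  by (metis act_inv_act inv_closed inv_inv)

lemma act_inj_iff: "\<lbrakk>g \<in> carrier G; x \<in> X; y \<in> X\<rbrakk> \<Longrightarrow> A g x = A g y \<longleftrightarrow> x = y"
  by (metis act_inv_act)

lemma inj_on_act: "g \<in> carrier G \<Longrightarrow> inj_on (A g) X"
  by (simp add: inj_on_def act_inj_iff)

lemma group_action_restrict: "group_action G X (\<lambda>g. restrict (A g) X)"
proof -
  have Bij: "restrict (A g) X \<in> Bij X" if g: "g \<in> carrier G" for g
  proof -
    have "bij_betw (A g) X X"
      by (rule bij_betwI[where g = "A (inv g)"])
        (simp_all add: g Pi_iff act_closed act_inv_act act_act_inv)
    then show ?thesis
      unfolding Bij_def by simp
  qed
  have mult: "restrict (A (g \<otimes> h)) X = compose X (restrict (A g) X) (restrict (A h) X)"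
    if "g \<in> carrier G" "h \<in> carrier G" for g h
    using that by (simp add: compose_def act_mult act_closed cong: restrict_cong)
  show ?thesis
    unfolding group_action_def group_hom_def group_hom_axioms_def hom_def
    using Bij mult group_BijGroup by (simp add: is_group BijGroup_def)
qed

lemma subgroup_stabilizer_in:
  assumes "subgroup H G" "x \<in> X"
  shows "subgroup {h \<in> H. A h x = x} G"
proof -
  interpret group_action G X "\<lambda>g. restrict (A g) X" by (rule group_action_restrict)
  have "{h \<in> H. A h x = x} = H \<inter> stabilizer G (\<lambda>g. restrict (A g) X) x"
    using assms subgroup.subset by (fastforce simp: stabilizer_def)
  then show ?thesis
    using subgroups_Inter_pair assms stabilizer_subgroup by metis
qed

lemma card_orbit_mult_card_stabilizer:
  assumes "subgroup H G" "x \<in> X"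
  shows "card ((\<lambda>h. A h x) ` H) * card {h \<in> H. A h x = x} = card H"
proof -
  interpret group_action G X "\<lambda>g. restrict (A g) X" by (rule group_action_restrict)
  interpret H: group_action "G\<lparr>carrier := H\<rparr>" X "\<lambda>g. restrict (A g) X"
    by (rule induced_action[OF assms(1)])
  show ?thesis
    using H.orbit_stabilizer_theorem[OF assms(2)] assms(2)
    by (simp add: orbit_def stabilizer_def order_def Setcompr_eq_image)
qed

lemma action_on_prod:
  assumes "action_on G Y B"
  shows "action_on G (X \<times> Y) (\<lambda>g p. (A g (fst p), B g (snd p)))"
proof -
  interpret B: action_on G Y B by (rule assms)
  show ?thesis
    by (intro action_on.intro action_on_axioms.intro is_group)
      (auto simp: act_closed act_mult act_one B.act_closed B.act_mult B.act_one)
qed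

lemma card_orbit_pair:
  assumes B: "action_on G Y B" and K: "subgroup K G" "finite K" and xy: "x \<in> X" "y \<in> Y"
  shows "card ((\<lambda>k. (A k x, B k y)) ` K) =
    card ((\<lambda>k. A k x) ` K) * card ((\<lambda>k. B k y) ` {k \<in> K. A k x = x})"
proof -
  interpret B: action_on G Y B by (rule B)
  interpret AB: action_on G "X \<times> Y" "\<lambda>g p. (A g (fst p), B g (snd p))"
    by (rule action_on_prod[OF B])
  define Kx where "Kx = {k \<in> K. A k x = x}"
  define Kxy where "Kxy = {k \<in> Kx. B k y = y}"
  have orbit_xy: "card ((\<lambda>k. (A k x, B k y)) ` K) * card Kxy = card K"
    using AB.card_orbit_mult_card_stabilizer[OF K(1), of "(x, y)"] xy
    by (simp add: Kxy_def Kx_def conj_assoc)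
  have orbit_x: "card ((\<lambda>k. A k x) ` K) * card Kx = card K"
    unfolding Kx_def by (rule card_orbit_mult_card_stabilizer[OF K(1) xy(1)])
  have orbit_y: "card ((\<lambda>k. B k y) ` Kx) * card Kxy = card Kx"
    unfolding Kxy_def
    by (rule B.card_orbit_mult_card_stabilizer[OF _ xy(2)])
      (unfold Kx_def, rule subgroup_stabilizer_in[OF K(1) xy(1)])
  have "card Kxy \<noteq> 0"
    using K xy subgroup.one_closed[OF K(1)] act_one B.act_one
    by (auto simp: Kxy_def Kx_def)
  moreover have "card ((\<lambda>k. (A k x, B k y)) ` K) * card Kxy =
      (card ((\<lambda>k. A k x) ` K) * card ((\<lambda>k. B k y) ` Kx)) * card Kxy"
    by (simp add: orbit_xy flip: orbit_x orbit_y mult.assoc)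
  ultimately show ?thesis
    unfolding Kx_def by simp
qed

lemma nbrs_orbital:
  assumes g: "g \<in> carrier G" and vw: "v \<in> X" "w \<in> X"
  shows "nbrs ((\<lambda>h. (A h v, A h w)) ` carrier G) (A g v) =
    A g ` (\<lambda>k. A k w) ` {k \<in> carrier G. A k v = v}"
proof (intro Set.set_eqI iffI)
  fix u assume "u \<in> nbrs ((\<lambda>h. (A h v, A h w)) ` carrier G) (A g v)"
  then obtain h where h: "h \<in> carrier G" "A g v = A h v" "u = A h w"
    by (auto simp: nbrs_def)
  define k where "k = inv g \<otimes> h"
  have k: "k \<in> carrier G" "g \<otimes> k = h"
    using g h(1) by (simp_all add: k_def m_assoc[symmetric])
  have "A k v = v"
    using g h vw by (simp add: k_def act_mult act_inv_act flip: h(2))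
  moreover have "u = A g (A k w)"
    using g k h(3) vw by (simp add: act_mult[symmetric])
  ultimately show "u \<in> A g ` (\<lambda>k. A k w) ` {k \<in> carrier G. A k v = v}"
    using k(1) by blast
next
  fix u assume "u \<in> A g ` (\<lambda>k. A k w) ` {k \<in> carrier G. A k v = v}"
  then obtain k where k: "k \<in> carrier G" "A k v = v" "u = A g (A k w)" by blast
  then have "(A g v, u) = (A (g \<otimes> k) v, A (g \<otimes> k) w)"
    using g vw by (simp add: act_mult)
  then show "u \<in> nbrs ((\<lambda>h. (A h v, A h w)) ` carrier G) (A g v)"
    using g k(1) by (auto simp: nbrs_def)
qed

lemma card_nbrs_orbital:
  assumes "g \<in> carrier G" "v \<in> X" "w \<in> X"
  shows "card (nbrs ((\<lambda>h. (A h v, A h w)) ` carrier G) (A g v)) =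
    card ((\<lambda>k. A k w) ` {k \<in> carrier G. A k v = v})"
  unfolding nbrs_orbital[OF assms]
  using assms by (auto intro!: card_image inj_onI simp: act_closed act_inj_iff)

end

definition transitive_on :: "('g \<Rightarrow> 'a \<Rightarrow> 'a) \<Rightarrow> 'g set \<Rightarrow> 'a set \<Rightarrow> bool" where
  "transitive_on \<phi> H Y \<longleftrightarrow> (\<forall>y\<in>Y. \<forall>z\<in>Y. \<exists>h\<in>H. \<phi> h y = z)"

context group_action
begin

lemma action_on_points: "action_on G E \<phi>"
proof -
  have "group G" by (rule group_hom.axioms(1)[OF group_hom])
  moreover have "\<phi> \<one> x = x" if "x \<in> E" for x
    using fun_cong[OF id_eq_one, of x] that by simp
  ultimately show ?thesis
    by (intro action_on.intro action_on_axioms.intro) (auto intro: element_image simp: composition_rule)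
qed

lemma action_on_subsets: "action_on G (Pow E) (\<lambda>g S. \<phi> g ` S)"
proof -
  interpret action_on G E \<phi> by (rule action_on_points)
  show ?thesis
    by (intro action_on.intro action_on_axioms.intro is_group)
      (auto simp: act_closed act_mult act_one image_image subset_iff cong: image_cong)
qed

lemma action_on_flags: "action_on G (E \<times> Pow E) (flag_act \<phi>)"
proof -
  have "flag_act \<phi> = (\<lambda>g p. (\<phi> g (fst p), \<phi> g ` snd p))"
    by (simp add: fun_eq_iff flag_act_def)
  then show ?thesis
    using action_on.action_on_prod[OF action_on_points action_on_subsets] by simp
qed

lemma image_complement: "\<lbrakk>g \<in> carrier G; S \<subseteq> E\<rbrakk> \<Longrightarrow> \<phi> g ` (E - S) = E - \<phi> g ` S"
  using inj_on_image_set_diff[OF inj_prop, of g E S] surj_prop[of g] by auto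

lemma image_subset_carrier: "\<lbrakk>g \<in> carrier G; S \<subseteq> E\<rbrakk> \<Longrightarrow> \<phi> g ` S \<subseteq> E"
  using surj_prop by blast

lemma setwise_stab_complement:
  assumes "H \<subseteq> carrier G" "S \<subseteq> E"
  shows "setwise_stab \<phi> H (E - S) = setwise_stab \<phi> H S"
proof -
  have "\<phi> h ` (E - S) = E - S \<longleftrightarrow> \<phi> h ` S = S" if "h \<in> H" for h
    using that assms by (simp add: subsetD image_complement image_subset_carrier Diff_eq_Diff_iff)
  then show ?thesis
    unfolding setwise_stab_def by blast
qed

lemma card_set_orbit_complement:
  assumes "H \<subseteq> carrier G" "S \<subseteq> E"
  shows "card (set_orbit \<phi> H (E - S)) = card (set_orbit \<phi> H S)"
proof -
  have "set_orbit \<phi> H (E - S) = (\<lambda>T. E - T) ` set_orbit \<phi> H S"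
    unfolding set_orbit_def image_image
    by (rule image_cong[OF refl], rule image_complement) (use assms in auto)
  moreover have "inj_on (\<lambda>T. E - T) (Pow E)"
    by (rule inj_onI) (simp add: Diff_eq_Diff_iff)
  moreover have "set_orbit \<phi> H S \<subseteq> Pow E"
    unfolding set_orbit_def using assms image_subset_carrier by blast
  ultimately show ?thesis
    by (simp add: card_image inj_on_subset)
qed

lemma orbit_eq_if_two_transitive:
  assumes two_trans: "\<forall>x\<in>E. \<forall>y\<in>E. \<forall>x'\<in>E. \<forall>y'\<in>E. x \<noteq> y \<longrightarrow> x' \<noteq> y' \<longrightarrow>
      (\<exists>g\<in>carrier G. \<phi> g x = x' \<and> \<phi> g y = y')"
    and x: "x \<in> E"
  shows "(\<lambda>g. \<phi> g x) ` carrier G = E"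
proof
  interpret action_on G E \<phi> by (rule action_on_points)
  show "(\<lambda>g. \<phi> g x) ` carrier G \<subseteq> E"
    using x act_closed by blast
  show "E \<subseteq> (\<lambda>g. \<phi> g x) ` carrier G"
  proof
    fix y assume y: "y \<in> E"
    show "y \<in> (\<lambda>g. \<phi> g x) ` carrier G"
    proof (cases "y = x")
      case True
      then show ?thesis
        using x act_one by (metis image_eqI one_closed)
    next
      case False
      then obtain g where "g \<in> carrier G" "\<phi> g x = y"
        using two_trans x y by metis
      then show ?thesis by blast
    qed
  qed
qed

lemma transitive_on_conj:
  assumes g: "g \<in> carrier G" and x: "x \<in> E" and M: "M \<subseteq> E"
    and trans: "transitive_on \<phi> (setwise_stab \<phi> (stabilizer G \<phi> (\<phi> g x)) (\<phi> g ` M)) (\<phi> g ` M - {\<phi> g x})"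
  shows "transitive_on \<phi> (setwise_stab \<phi> (stabilizer G \<phi> x) M) (M - {x})"
  unfolding transitive_on_def
proof (intro ballI)
  interpret P: action_on G E \<phi> by (rule action_on_points)
  interpret S: action_on G "Pow E" "\<lambda>g S. \<phi> g ` S" by (rule action_on_subsets)
  fix y z assume y: "y \<in> M - {x}" and z: "z \<in> M - {x}"
  have "\<phi> g y \<in> \<phi> g ` M - {\<phi> g x}" "\<phi> g z \<in> \<phi> g ` M - {\<phi> g x}"
    using g x y z M by (auto simp: P.act_inj_iff subsetD)
  then obtain h where h: "h \<in> carrier G" "\<phi> h (\<phi> g x) = \<phi> g x" "\<phi> h ` \<phi> g ` M = \<phi> g ` M"
      "\<phi> h (\<phi> g y) = \<phi> g z"
    using trans unfolding transitive_on_def setwise_stab_def stabilizer_def by blast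
  define k where "k = inv g \<otimes> h \<otimes> g"
  have k: "k \<in> carrier G"
    using g h(1) by (simp add: k_def)
  have "\<phi> k x = x" "\<phi> k y = z"
    using g h x y z M by (auto simp: k_def P.act_mult P.act_closed P.act_inv_act subsetD)
  moreover have "\<phi> k ` M = M"
    using g h M by (simp add: k_def S.act_mult image_subset_carrier S.act_inv_act)
  ultimately show "\<exists>k\<in>setwise_stab \<phi> (stabilizer G \<phi> x) M. \<phi> k y = z"
    using k by (auto simp: setwise_stab_def stabilizer_def)
qed

lemma feasible_imp_transitive_on:
  assumes feas: "feasible G \<phi> E (flag_orbit G \<phi> (x, M))" and x: "x \<in> E" and M: "M \<subseteq> E"
  shows "transitive_on \<phi> (setwise_stab \<phi> (stabilizer G \<phi> x) M) (M - {x})"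
proof -
  obtain y M' where "(y, M') \<in> flag_orbit G \<phi> (x, M)"
    and "transitive_on \<phi> (setwise_stab \<phi> (stabilizer G \<phi> y) M') (M' - {y})"
    using feas unfolding feasible_def transitive_on_def by blast
  moreover obtain g where "g \<in> carrier G" "y = \<phi> g x" "M' = \<phi> g ` M"
    using calculation(1) by (auto simp: flag_orbit_def flag_act_def)
  ultimately show ?thesis
    using transitive_on_conj x M by blast
qed

lemma orbit_setwise_stab_eq:
  assumes trans: "transitive_on \<phi> (setwise_stab \<phi> (stabilizer G \<phi> x) M) (M - {x})"
    and x: "x \<in> E" and M: "M \<subseteq> E" and y: "y \<in> M - {x}"
  shows "(\<lambda>k. \<phi> k y) ` setwise_stab \<phi> (stabilizer G \<phi> x) M = M - {x}"
proof
  interpret action_on G E \<phi> by (rule action_on_points)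
  show "(\<lambda>k. \<phi> k y) ` setwise_stab \<phi> (stabilizer G \<phi> x) M \<subseteq> M - {x}"
    using x y M by (auto simp: setwise_stab_def stabilizer_def act_inj_iff subsetD)
  show "M - {x} \<subseteq> (\<lambda>k. \<phi> k y) ` setwise_stab \<phi> (stabilizer G \<phi> x) M"
  proof
    fix z assume "z \<in> M - {x}"
    then obtain k where "k \<in> setwise_stab \<phi> (stabilizer G \<phi> x) M" "\<phi> k y = z"
      using trans y unfolding transitive_on_def by blast
    then show "z \<in> (\<lambda>k. \<phi> k y) ` setwise_stab \<phi> (stabilizer G \<phi> x) M"
      by (blast intro: rev_image_eqI)
  qed
qed

lemma flag_stabilizer:
  "{k \<in> carrier G. flag_act \<phi> k (x, M) = (x, M)} = setwise_stab \<phi> (stabilizer G \<phi> x) M"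
  by (auto simp: flag_act_def setwise_stab_def stabilizer_def)

lemma subgroup_setwise_stab:
  assumes "x \<in> E" "M \<subseteq> E"
  shows "subgroup (setwise_stab \<phi> (stabilizer G \<phi> x) M) G"
proof -
  interpret action_on G "E \<times> Pow E" "flag_act \<phi>" by (rule action_on_flags)
  show ?thesis
    using subgroup_stabilizer_in[OF subgroup_self, of "(x, M)"] assms
    by (simp add: flag_stabilizer)
qed

lemma card_flag_orbit:
  assumes "finite (carrier G)" "(\<lambda>g. \<phi> g x) ` carrier G = E" "x \<in> E" "M \<subseteq> E"
  shows "card (flag_orbit G \<phi> (x, M)) = card E * card (set_orbit \<phi> (stabilizer G \<phi> x) M)"
proof -
  interpret action_on G E \<phi> by (rule action_on_points)
  have "flag_orbit G \<phi> (x, M) = (\<lambda>k. (\<phi> k x, \<phi> k ` M)) ` carrier G"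
    by (simp add: flag_orbit_def flag_act_def)
  then show ?thesis
    using card_orbit_pair[OF action_on_subsets subgroup_self] assms
    by (simp add: set_orbit_def stabilizer_def)
qed

end

locale flag_orbital = group_action G E \<phi> for G (structure) and E and \<phi> +
  fixes \<sigma> \<tau> :: 'a and M M' :: "'a set"
  assumes finite_carrier: "finite (carrier G)"
    and flag: "\<sigma> \<in> E" "M \<subseteq> E"
    and second_flag: "(\<tau>, M') \<in> flag_orbit G \<phi> (\<sigma>, M)"
begin

abbreviation \<Omega> where "\<Omega> \<equiv> flag_orbit G \<phi> (\<sigma>, M)"

abbreviation \<Psi> where "\<Psi> \<equiv> flagpair_orbit G \<phi> ((\<sigma>, M), (\<tau>, M'))"

abbreviation flag_stab where "flag_stab \<equiv> setwise_stab \<phi> (stabilizer G \<phi> \<sigma>) M"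

sublocale F: action_on G "E \<times> Pow E" "flag_act \<phi>"
  by (rule action_on_flags)

lemma second_flag_in_E: "\<tau> \<in> E" "M' \<subseteq> E"
  using second_flag flag image_subset_carrier element_image
  by (auto simp: flag_orbit_def flag_act_def)

lemma flag_act_in_\<Omega>:
  assumes "g \<in> carrier G" "w \<in> \<Omega>"
  shows "flag_act \<phi> g w \<in> \<Omega>"
proof -
  obtain h where "h \<in> carrier G" "w = flag_act \<phi> h (\<sigma>, M)"
    using assms(2) by (auto simp: flag_orbit_def)
  then have "flag_act \<phi> g w = flag_act \<phi> (g \<otimes> h) (\<sigma>, M)" "g \<otimes> h \<in> carrier G"
    using assms(1) flag by (simp_all add: F.act_mult)
  then show ?thesis
    by (simp add: flag_orbit_def)
qed

lemma nbrs_flag_act: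
  assumes "g \<in> carrier G"
  shows "nbrs \<Psi> (flag_act \<phi> g (\<sigma>, M)) = flag_act \<phi> g ` (\<lambda>k. flag_act \<phi> k (\<tau>, M')) ` flag_stab"
  using F.nbrs_orbital[OF assms, of "(\<sigma>, M)" "(\<tau>, M')"] flag second_flag_in_E
  by (simp add: flagpair_orbit_def flag_stabilizer)

lemma card_nbrs_eq_card_orbit:
  assumes "v \<in> \<Omega>"
  shows "card (nbrs \<Psi> v) = card ((\<lambda>k. flag_act \<phi> k (\<tau>, M')) ` flag_stab)"
proof -
  obtain g where "g \<in> carrier G" "v = flag_act \<phi> g (\<sigma>, M)"
    using assms by (auto simp: flag_orbit_def)
  then show ?thesis
    using F.card_nbrs_orbital[of g "(\<sigma>, M)" "(\<tau>, M')"] flag second_flag_in_E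
    by (simp add: flagpair_orbit_def flag_stabilizer)
qed

lemma finite_flag_stab: "finite flag_stab"
  by (rule finite_subset[OF _ finite_carrier]) (auto simp: setwise_stab_def stabilizer_def)

lemma card_nbrs:
  assumes trans: "transitive_on \<phi> flag_stab (M - {\<sigma>})" and \<tau>: "\<tau> \<in> M - {\<sigma>}" and v: "v \<in> \<Omega>"
  shows "card (nbrs \<Psi> v) = card (M - {\<sigma>}) *
    card (set_orbit \<phi> (setwise_stab \<phi> (stabilizer G \<phi> \<sigma> \<inter> stabilizer G \<phi> \<tau>) M) M')"
proof -
  interpret P: action_on G E \<phi> by (rule action_on_points)
  have "card ((\<lambda>k. (\<phi> k \<tau>, \<phi> k ` M')) ` flag_stab) =
      card ((\<lambda>k. \<phi> k \<tau>) ` flag_stab) * card ((\<lambda>k. \<phi> k ` M') ` {k \<in> flag_stab. \<phi> k \<tau> = \<tau>})"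
    using P.card_orbit_pair[OF action_on_subsets subgroup_setwise_stab[OF flag] finite_flag_stab]
      second_flag_in_E by simp
  moreover have "(\<lambda>k. \<phi> k \<tau>) ` flag_stab = M - {\<sigma>}"
    by (rule orbit_setwise_stab_eq[OF trans flag \<tau>])
  moreover have "{k \<in> flag_stab. \<phi> k \<tau> = \<tau>} =
      setwise_stab \<phi> (stabilizer G \<phi> \<sigma> \<inter> stabilizer G \<phi> \<tau>) M"
    by (auto simp: setwise_stab_def stabilizer_def)
  ultimately show ?thesis
    by (simp add: card_nbrs_eq_card_orbit[OF v] flag_act_def set_orbit_def)
qed

lemma flags_at_with_nbrs:
  "{v \<in> flags_at \<Omega> \<sigma>. nbrs \<Psi> v \<inter> flags_at \<Omega> \<tau> \<noteq> {}} =
    (\<lambda>h. flag_act \<phi> h (\<sigma>, M)) ` (stabilizer G \<phi> \<sigma> \<inter> stabilizer G \<phi> \<tau>)"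
proof (intro Set.set_eqI iffI)
  fix v assume "v \<in> {v \<in> flags_at \<Omega> \<sigma>. nbrs \<Psi> v \<inter> flags_at \<Omega> \<tau> \<noteq> {}}"
  then obtain w where "fst v = \<sigma>" "(v, w) \<in> \<Psi>" "fst w = \<tau>"
    by (auto simp: flags_at_def nbrs_def)
  moreover from \<open>(v, w) \<in> \<Psi>\<close> obtain h where
    "h \<in> carrier G" "v = flag_act \<phi> h (\<sigma>, M)" "w = flag_act \<phi> h (\<tau>, M')"
    by (auto simp: flagpair_orbit_def)
  ultimately show "v \<in> (\<lambda>h. flag_act \<phi> h (\<sigma>, M)) ` (stabilizer G \<phi> \<sigma> \<inter> stabilizer G \<phi> \<tau>)"
    by (auto simp: flag_act_def stabilizer_def)
next
  fix v assume "v \<in> (\<lambda>h. flag_act \<phi> h (\<sigma>, M)) ` (stabilizer G \<phi> \<sigma> \<inter> stabilizer G \<phi> \<tau>)"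
  then obtain h where h: "h \<in> carrier G" "\<phi> h \<sigma> = \<sigma>" "\<phi> h \<tau> = \<tau>" "v = flag_act \<phi> h (\<sigma>, M)"
    by (auto simp: stabilizer_def)
  have "(v, flag_act \<phi> h (\<tau>, M')) \<in> \<Psi>"
    unfolding flagpair_orbit_def h(4) by (rule rev_image_eqI[OF h(1)]) simp
  then have "flag_act \<phi> h (\<tau>, M') \<in> nbrs \<Psi> v \<inter> flags_at \<Omega> \<tau>"
    using h flag_act_in_\<Omega>[OF h(1) second_flag]
    by (simp add: nbrs_def flags_at_def flag_act_def)
  moreover have "v \<in> \<Omega>"
    unfolding flag_orbit_def h(4) by (rule imageI[OF h(1)])
  then have "v \<in> flags_at \<Omega> \<sigma>"
    using h by (simp add: flags_at_def flag_act_def)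
  ultimately show "v \<in> {v \<in> flags_at \<Omega> \<sigma>. nbrs \<Psi> v \<inter> flags_at \<Omega> \<tau> \<noteq> {}}"
    by blast
qed

lemma card_flags_at_with_nbrs:
  "card {v \<in> flags_at \<Omega> \<sigma>. nbrs \<Psi> v \<inter> flags_at \<Omega> \<tau> \<noteq> {}} =
    card (set_orbit \<phi> (stabilizer G \<phi> \<sigma> \<inter> stabilizer G \<phi> \<tau>) M)"
proof -
  have "(\<lambda>h. flag_act \<phi> h (\<sigma>, M)) ` (stabilizer G \<phi> \<sigma> \<inter> stabilizer G \<phi> \<tau>) =
      Pair \<sigma> ` set_orbit \<phi> (stabilizer G \<phi> \<sigma> \<inter> stabilizer G \<phi> \<tau>) M"
    unfolding set_orbit_def image_image
    by (rule image_cong) (auto simp: flag_act_def stabilizer_def)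
  then show ?thesis
    by (simp add: flags_at_with_nbrs card_Pair_image)
qed

lemma card_nbrs_Int_flags_at:
  assumes "v \<in> flags_at \<Omega> \<sigma>" "nbrs \<Psi> v \<inter> flags_at \<Omega> \<tau> \<noteq> {}"
  shows "card (nbrs \<Psi> v \<inter> flags_at \<Omega> \<tau>) =
    card (set_orbit \<phi> (setwise_stab \<phi> (stabilizer G \<phi> \<sigma> \<inter> stabilizer G \<phi> \<tau>) M) M')"
proof -
  interpret P: action_on G E \<phi> by (rule action_on_points)
  define K where "K = setwise_stab \<phi> (stabilizer G \<phi> \<sigma> \<inter> stabilizer G \<phi> \<tau>) M"
  obtain h where h: "h \<in> carrier G" "\<phi> h \<tau> = \<tau>" "v = flag_act \<phi> h (\<sigma>, M)"
    using assms flags_at_with_nbrs by (auto simp: stabilizer_def)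
  have K_sub: "K \<subseteq> flag_stab"
    by (auto simp: K_def setwise_stab_def stabilizer_def)
  have fixes_\<tau>: "fst (flag_act \<phi> h (flag_act \<phi> k (\<tau>, M'))) = \<tau> \<longleftrightarrow> k \<in> K"
    if "k \<in> flag_stab" for k
  proof -
    have "k \<in> carrier G"
      using that by (simp add: setwise_stab_def stabilizer_def)
    then have "\<phi> h (\<phi> k \<tau>) = \<phi> h \<tau> \<longleftrightarrow> \<phi> k \<tau> = \<tau>"
      using h(1) second_flag_in_E by (simp add: P.act_inj_iff P.act_closed)
    then show ?thesis
      using that h(2) by (auto simp: K_def flag_act_def setwise_stab_def stabilizer_def)
  qed
  have in_\<Omega>: "flag_act \<phi> h (flag_act \<phi> k (\<tau>, M')) \<in> \<Omega>" if "k \<in> flag_stab" for k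
    using that h(1) flag_act_in_\<Omega> second_flag by (simp add: setwise_stab_def stabilizer_def)
  define S where "S = (\<lambda>k. flag_act \<phi> h (flag_act \<phi> k (\<tau>, M'))) ` flag_stab"
  have "S \<subseteq> \<Omega>"
    unfolding S_def by (rule image_subsetI) (rule in_\<Omega>)
  moreover have "nbrs \<Psi> v = S"
    unfolding S_def h(3) nbrs_flag_act[OF h(1)] image_image ..
  ultimately have "nbrs \<Psi> v \<inter> flags_at \<Omega> \<tau> = {w \<in> S. fst w = \<tau>}"
    unfolding flags_at_def by blast
  also have "\<dots> = flag_act \<phi> h ` (\<lambda>k. flag_act \<phi> k (\<tau>, M')) ` K"
  proof -
    have "{k \<in> flag_stab. fst (flag_act \<phi> h (flag_act \<phi> k (\<tau>, M'))) = \<tau>} = K"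
      using fixes_\<tau> K_sub by blast
    then show ?thesis
      unfolding S_def Compr_image_eq image_image by simp
  qed
  also have "card \<dots> = card ((\<lambda>k. flag_act \<phi> k (\<tau>, M')) ` K)"
  proof (rule card_image, rule inj_on_subset[OF F.inj_on_act[OF h(1)]])
    show "(\<lambda>k. flag_act \<phi> k (\<tau>, M')) ` K \<subseteq> E \<times> Pow E"
      using K_sub second_flag_in_E
      by (intro image_subsetI F.act_closed) (auto simp: setwise_stab_def stabilizer_def)
  qed
  also have "(\<lambda>k. flag_act \<phi> k (\<tau>, M')) ` K = Pair \<tau> ` set_orbit \<phi> K M'"
    unfolding set_orbit_def image_image
    by (rule image_cong) (auto simp: K_def flag_act_def setwise_stab_def stabilizer_def)
  finally show ?thesis
    by (simp add: K_def card_Pair_image)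
qed

end

theorem lemma2p3:
  fixes G :: "('g, 'b) monoid_scheme" and \<phi> :: "'g \<Rightarrow> 'a \<Rightarrow> 'a"
    and P :: "'a set" and Ls :: "'a set set"
    and \<sigma> \<tau> :: 'a and L N :: "'a set"
  defines "\<Omega> \<equiv> flag_orbit G \<phi> (\<sigma>, P - L)"
      and "\<Psi> \<equiv> flagpair_orbit G \<phi> ((\<sigma>, P - L), (\<tau>, P - N))"
  assumes D: "G2_point_transitive G \<phi> P Ls"
      and antiflag: "L \<in> Ls" "\<sigma> \<in> P" "\<sigma> \<notin> L"
      and Nline: "N \<in> Ls"
      and feas: "feasible G \<phi> P \<Omega>"
      and PsiC: "((\<sigma>, P - L), (\<tau>, P - N)) \<in> flag_C \<Omega>"
      and sp: "self_paired \<Psi>"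
  shows "card \<Omega> = card P * card (set_orbit \<phi> (stabilizer G \<phi> \<sigma>) L)
    \<and> (\<forall>v\<in>\<Omega>. card (nbrs \<Psi> v) = (card P - card L - 1) *
          card (set_orbit \<phi> (setwise_stab \<phi> (stabilizer G \<phi> \<sigma> \<inter> stabilizer G \<phi> \<tau>) L) N))
    \<and> card {v \<in> flags_at \<Omega> \<sigma>. nbrs \<Psi> v \<inter> flags_at \<Omega> \<tau> \<noteq> {}}
        = card (set_orbit \<phi> (stabilizer G \<phi> \<sigma> \<inter> stabilizer G \<phi> \<tau>) L)
    \<and> (\<forall>v\<in>flags_at \<Omega> \<sigma>. nbrs \<Psi> v \<inter> flags_at \<Omega> \<tau> \<noteq> {} \<longrightarrow>
          card (nbrs \<Psi> v \<inter> flags_at \<Omega> \<tau>) =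
          card (set_orbit \<phi> (setwise_stab \<phi> (stabilizer G \<phi> \<sigma> \<inter> stabilizer G \<phi> \<tau>) L) N))"
proof -
  interpret group_action G P \<phi>
    using D by (simp add: G2_point_transitive_def)
  have fin: "finite P" "finite (carrier G)" and lines: "L \<subseteq> P" "N \<subseteq> P"
    using D antiflag(1) Nline by (auto simp: G2_point_transitive_def linear_space_def)
  have transitive: "(\<lambda>g. \<phi> g \<sigma>) ` carrier G = P"
    by (rule orbit_eq_if_two_transitive) (use D antiflag in \<open>simp_all add: G2_point_transitive_def\<close>)
  have \<tau>: "\<tau> \<in> P - L - {\<sigma>}" "(\<tau>, P - N) \<in> \<Omega>"
    using PsiC by (auto simp: flag_C_def)
  interpret flag_orbital G P \<phi> \<sigma> \<tau> "P - L" "P - N"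
    by unfold_locales (use fin antiflag \<tau> in \<open>auto simp: \<Omega>_def\<close>)
  have flag_stab_transitive: "transitive_on \<phi> flag_stab (P - L - {\<sigma>})"
    using feasible_imp_transitive_on feas antiflag by (simp add: \<Omega>_def)
  have Gs: "stabilizer G \<phi> \<sigma> \<inter> stabilizer G \<phi> \<tau> \<subseteq> carrier G"
    using stabilizer_subset by blast
  then have Gsl: "setwise_stab \<phi> (stabilizer G \<phi> \<sigma> \<inter> stabilizer G \<phi> \<tau>) L \<subseteq> carrier G"
    by (auto simp: setwise_stab_def)
  have "card (P - L - {\<sigma>}) = card P - card L - 1"
    using fin lines antiflag by (simp add: card_Diff_subset finite_subset)
  then show ?thesis
    using card_flag_orbit[OF fin(2) transitive antiflag(2)] card_nbrs[OF flag_stab_transitive \<tau>(1)]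
      card_flags_at_with_nbrs card_nbrs_Int_flags_at
    by (simp add: \<Omega>_def \<Psi>_def lines setwise_stab_complement[OF Gs] card_set_orbit_complement[OF Gs]
        card_set_orbit_complement[OF stabilizer_subset] card_set_orbit_complement[OF Gsl])
qed

end
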